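(* Let $k\geq 2$ be an integer and let $G=(V,E)$ be a graph. Let $X_1,X_2\subseteq V$. Let $\sim$ be a symmetric binary relation on $V^2$ such that (a) for every $(u,v)\in V^2$ and $w\in X_1$, $w$ has at most $\Delta_1$ neighbours $z\in X_2$, and at most $s_1$ of them satisfy $(u,v)\sim(z,w)$; (b) for every $(u,v)\in V^2$ and $w\in X_2$, $w$ has at most $\Delta_2$ neighbours $z\in X_1$, and at most $s_2$ of them satisfy $(u,v)\sim(z,w)$. Let $M=\max(\Delta_1s_2,\Delta_2s_1)$. Then the number of homomorphic $2k$-cycles $(x_1,\dots,x_{2k})\in(X_1\times X_2\times X_1\times\dots\times X_2)\cup(X_2\times X_1\times X_2\times\dots\times X_1)$ in $G$ such that $(x_i,x_{i+1})\sim(x_j,x_{j+1})$ for some $i\neq j$ is at most $$32k\left(kM\hom(C_{2k-2},G)\hom(C_{2k},G)\right)^{1/2}.$$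
   Context: A homomorphic $2k$-cycle in $G$ is a tuple $(x_1,\dots,x_{2k})\in V^{2k}$ with $x_ix_{i+1}\in E$ for all $i$, indices modulo $2k$ (so $x_{2k+1}=x_1$). $\hom(H,G)$ is the number of homomorphisms from $H$ to $G$. Convention: $C_2$ is a single edge, so $\hom(C_2,G)=2|E|$. *)

theory Defs
  imports Complex_Main "HOL-Library.FuncSet"
begin

definition simple_graph :: "'a set \<Rightarrow> ('a \<Rightarrow> 'a \<Rightarrow> bool) \<Rightarrow> bool" where
  "simple_graph V E \<longleftrightarrow> finite V \<and> (\<forall>u v. E u v \<longrightarrow> u \<in> V \<and> v \<in> V)
     \<and> (\<forall>u v. E u v \<longrightarrow> E v u) \<and> (\<forall>u. \<not> E u u)"

text \<open>Homomorphic m-cycles: tuples (x_0,...,x_{m-1}) in V^m with x_i x_{i+1} an edge,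
  indices mod m. For m = 2 this gives 2|E| (the convention C_2 = single edge).\<close>
definition hom_cycles :: "'a set \<Rightarrow> ('a \<Rightarrow> 'a \<Rightarrow> bool) \<Rightarrow> nat \<Rightarrow> (nat \<Rightarrow> 'a) set" where
  "hom_cycles V E m = {x \<in> {0..<m} \<rightarrow>\<^sub>E V. \<forall>i<m. E (x i) (x (Suc i mod m))}"

definition hom_cycle :: "'a set \<Rightarrow> ('a \<Rightarrow> 'a \<Rightarrow> bool) \<Rightarrow> nat \<Rightarrow> nat" where
  "hom_cycle V E m = card (hom_cycles V E m)"

end

theory Submission
  imports Defs "HOL-Analysis.Convex"
begin

text \<open>Call a closed 2k-walk x anchored if its closing edge x(2k-1) x(0) is similar to one of its
  first k edges. Of two distinct edges of a closed 2k-walk one lies at most k steps after the other,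
  so every cycle counted in the theorem becomes anchored after one of 2k rotations, with the closing
  edge running between X1 and X2 in one of the two directions.
  An anchored cycle is a walk p of length k followed by a walk of length k - 1 from p(k) to one of
  the at most k * s neighbours z of p(0) for which (z, p(0)) is similar to an edge of p. Bounding the
  number of these closing walks by the root-mean-square inequality and then summing over p with
  Cauchy-Schwarz reduces everything to the inequality (sum over a, b of W(n,a,b)^2) \<le> hom(C_2n),
  where W(n,a,b) is the number of walks of length n from a to b, used with n = k and n = k - 1.
  This gives the bound with 4 in place of 32.\<close>

lemma simple_graph_sym: "simple_graph V E \<Longrightarrow> E u v \<Longrightarrow> E v u"
  unfolding simple_graph_def by blast

lemma simple_graph_finite: "simple_graph V E \<Longrightarrow> finite V"
  unfolding simple_graph_def by blast

lemma finite_hom_cycles: "finite V \<Longrightarrow> finite (hom_cycles V E m)"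
  unfolding hom_cycles_def by (rule finite_subset[OF _ finite_PiE[of "{0..<m}" "\<lambda>_. V"]]) auto

lemma hom_cycles_undefined: "x \<in> hom_cycles V E m \<Longrightarrow> m \<le> i \<Longrightarrow> x i = undefined"
  unfolding hom_cycles_def by (auto simp: PiE_def extensional_def)

definition walks :: "'a set \<Rightarrow> ('a \<Rightarrow> 'a \<Rightarrow> bool) \<Rightarrow> nat \<Rightarrow> (nat \<Rightarrow> 'a) set" where
  "walks V E n = {p \<in> {0..n} \<rightarrow>\<^sub>E V. \<forall>i<n. E (p i) (p (Suc i))}"

definition walks_between :: "'a set \<Rightarrow> ('a \<Rightarrow> 'a \<Rightarrow> bool) \<Rightarrow> nat \<Rightarrow> 'a \<Rightarrow> 'a \<Rightarrow> (nat \<Rightarrow> 'a) set" where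
  "walks_between V E n a b = {p \<in> walks V E n. p 0 = a \<and> p n = b}"

lemma finite_walks: "finite V \<Longrightarrow> finite (walks V E n)"
  unfolding walks_def by (rule finite_subset[OF _ finite_PiE[of "{0..n}" "\<lambda>_. V"]]) auto

lemma finite_walks_between: "finite V \<Longrightarrow> finite (walks_between V E n a b)"
  unfolding walks_between_def using finite_walks[of V E n] by auto

lemma walks_in_V: "p \<in> walks V E n \<Longrightarrow> i \<le> n \<Longrightarrow> p i \<in> V"
  unfolding walks_def by auto

lemma walks_undefined: "p \<in> walks V E n \<Longrightarrow> n < i \<Longrightarrow> p i = undefined"
  unfolding walks_def by (auto simp: PiE_def extensional_def)

definition join_walks :: "nat \<Rightarrow> (nat \<Rightarrow> 'a) \<Rightarrow> (nat \<Rightarrow> 'a) \<Rightarrow> nat \<Rightarrow> 'a" where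
  "join_walks n p q = (\<lambda>i. if i \<le> n then p i else if i < 2*n then q (2*n - i) else undefined)"

lemma join_walks_in_hom_cycles:
  assumes G: "simple_graph V E" and n: "n \<ge> 1"
    and p: "p \<in> walks V E n" and q: "q \<in> walks V E n" and ends: "p 0 = q 0" "p n = q n"
  shows "join_walks n p q \<in> hom_cycles V E (2*n)"
  unfolding hom_cycles_def mem_Collect_eq
proof (intro conjI allI impI)
  have second_half: "n \<le> i \<Longrightarrow> i < 2*n \<Longrightarrow> join_walks n p q i = q (2*n - i)" for i
    using ends by (auto simp: join_walks_def)
  have qE: "i < n \<Longrightarrow> E (q (Suc i)) (q i)" for i
    using q simple_graph_sym[OF G] unfolding walks_def by auto
  show "join_walks n p q \<in> {0..<2 * n} \<rightarrow>\<^sub>E V"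
    using walks_in_V[OF p] walks_in_V[OF q] n by (auto simp: join_walks_def PiE_def extensional_def)
  fix i assume i: "i < 2*n"
  consider "i < n" | "n \<le> i" "Suc i < 2*n" | "i = 2*n - 1" using i by linarith
  then show "E (join_walks n p q i) (join_walks n p q (Suc i mod (2 * n)))"
  proof cases
    case 1
    then show ?thesis using p n by (simp add: join_walks_def walks_def)
  next
    case 2
    then have "Suc (2*n - Suc i) = 2*n - i" by simp
    then show ?thesis using 2 second_half[of i] second_half[of "Suc i"] qE[of "2*n - Suc i"] by simp
  next
    case 3
    then have "Suc i mod (2*n) = 0" "join_walks n p q i = q (Suc 0)"
      using n second_half[of i] by auto
    then show ?thesis using n qE[of 0] ends by (simp add: join_walks_def)
  qed
qed

lemma inj_on_join_walks:
  "inj_on (\<lambda>(p, q). join_walks n p q)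
     {(p, q). p \<in> walks V E n \<and> q \<in> walks V E n \<and> p 0 = q 0 \<and> p n = q n}"
proof (rule inj_onI, clarsimp)
  fix p q p' q'
  assume p: "p \<in> walks V E n" and q: "q \<in> walks V E n" and p': "p' \<in> walks V E n"
    and q': "q' \<in> walks V E n" and ends: "p 0 = q 0" "p n = q n" "p' 0 = q' 0" "p' n = q' n"
    and eq: "join_walks n p q = join_walks n p' q'"
  have "p i = p' i" for i
    using fun_cong[OF eq, of i] walks_undefined[OF p, of i] walks_undefined[OF p', of i]
    by (cases "i \<le> n") (simp_all add: join_walks_def)
  moreover have "q i = q' i" for i
  proof -
    consider "i = 0" | "i = n" | "0 < i" "i < n" | "n < i" by linarith
    then show ?thesis
    proof cases
      case 3
      then have "\<not> 2*n - i \<le> n" "2*n - i < 2*n" "2*n - (2*n - i) = i" by auto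
      then show ?thesis using fun_cong[OF eq, of "2*n - i"] by (simp add: join_walks_def)
    qed (use ends \<open>\<And>i. p i = p' i\<close> walks_undefined[OF q] walks_undefined[OF q'] in metis)+
  qed
  ultimately show "p = p' \<and> q = q'" by auto
qed

lemma sum_card_walks_between_squared_le:
  assumes G: "simple_graph V E" and n: "n \<ge> 1"
  shows "(\<Sum>(a, b)\<in>V \<times> V. real (card (walks_between V E n a b))^2) \<le> real (hom_cycle V E (2*n))"
proof -
  have fV: "finite V" using simple_graph_finite[OF G] .
  let ?W = "\<lambda>(a, b). walks_between V E n a b"
  let ?P = "{(p, q). p \<in> walks V E n \<and> q \<in> walks V E n \<and> p 0 = q 0 \<and> p n = q n}"
  have "(\<Sum>ab\<in>V \<times> V. card (?W ab \<times> ?W ab)) = card (\<Union>ab\<in>V \<times> V. ?W ab \<times> ?W ab)"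
    by (rule card_UN_disjoint[symmetric])
      (use finite_walks_between[OF fV] in \<open>auto simp: fV walks_between_def\<close>)
  also have "(\<Union>ab\<in>V \<times> V. ?W ab \<times> ?W ab) = ?P"
    by (auto simp: walks_between_def walks_in_V)
  also have "card ?P \<le> card (hom_cycles V E (2*n))"
    by (rule card_inj_on_le[OF inj_on_join_walks _ finite_hom_cycles[OF fV]])
      (use join_walks_in_hom_cycles[OF G n] in auto)
  finally show ?thesis
    by (simp add: hom_cycle_def case_prod_beta power2_eq_square card_cartesian_product
        flip: of_nat_mult of_nat_sum)
qed

lemma sum_walks_by_endpoints:
  assumes fV: "finite V" and Y: "Y \<subseteq> V"
  shows "(\<Sum>p\<in>{p \<in> walks V E n. p 0 \<in> Y}. h (p 0) (p n))
       = (\<Sum>(a, b)\<in>Y \<times> V. real (card (walks_between V E n a b)) * h a b)"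
proof -
  let ?S = "{p \<in> walks V E n. p 0 \<in> Y}"
  have "(\<Sum>p\<in>?S. h (p 0) (p n)) = (\<Sum>ab\<in>Y \<times> V. \<Sum>p\<in>{p \<in> ?S. (p 0, p n) = ab}. h (p 0) (p n))"
    by (rule sum.group[symmetric])
      (use finite_subset[OF Y fV] finite_walks[OF fV] in \<open>auto simp: fV walks_in_V\<close>)
  also have "\<dots> = (\<Sum>(a, b)\<in>Y \<times> V. \<Sum>p\<in>walks_between V E n a b. h a b)"
  proof (rule sum.cong[OF refl], clarify)
    fix a b assume "a \<in> Y"
    then have "{p \<in> ?S. (p 0, p n) = (a, b)} = walks_between V E n a b"
      by (auto simp: walks_between_def)
    then show "(\<Sum>p\<in>{p \<in> ?S. (p 0, p n) = (a, b)}. h (p 0) (p n))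
        = (\<Sum>p\<in>walks_between V E n a b. h a b)"
      by (auto simp: walks_between_def intro: sum.cong)
  qed
  finally show ?thesis by (simp add: case_prod_beta)
qed

lemma sum_mult_sqrt_le:
  fixes a b :: "'i \<Rightarrow> real"
  assumes "\<And>i. i \<in> I \<Longrightarrow> b i \<ge> 0"
  shows "(\<Sum>i\<in>I. a i * sqrt (b i)) \<le> sqrt ((\<Sum>i\<in>I. (a i)^2) * (\<Sum>i\<in>I. b i))"
proof (rule real_le_rsqrt)
  show "(\<Sum>i\<in>I. a i * sqrt (b i))^2 \<le> (\<Sum>i\<in>I. (a i)^2) * (\<Sum>i\<in>I. b i)"
    using Cauchy_Schwarz_ineq_sum[of a "\<lambda>i. sqrt (b i)" I] assms by simp
qed

definition sim_neighbours ::
    "('a \<Rightarrow> 'a \<Rightarrow> bool) \<Rightarrow> 'a set \<Rightarrow> ('a \<times> 'a \<Rightarrow> 'a \<times> 'a \<Rightarrow> bool) \<Rightarrow> nat \<Rightarrow> (nat \<Rightarrow> 'a) \<Rightarrow> 'a set"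
  where "sim_neighbours E Z sim n p = {z \<in> Z. E (p 0) z \<and> (\<exists>i<n. sim (p i, p (Suc i)) (z, p 0))}"

definition closing_walks ::
    "'a set \<Rightarrow> ('a \<Rightarrow> 'a \<Rightarrow> bool) \<Rightarrow> 'a set \<Rightarrow> ('a \<times> 'a \<Rightarrow> 'a \<times> 'a \<Rightarrow> bool) \<Rightarrow> nat
      \<Rightarrow> (nat \<Rightarrow> 'a) \<Rightarrow> (nat \<Rightarrow> 'a) set"
  where "closing_walks V E Z sim n p =
    {q \<in> walks V E (n - 1). q 0 = p n \<and> q (n - 1) \<in> sim_neighbours E Z sim n p}"

definition anchored_cycles ::
    "'a set \<Rightarrow> ('a \<Rightarrow> 'a \<Rightarrow> bool) \<Rightarrow> nat \<Rightarrow> 'a set \<Rightarrow> 'a set \<Rightarrow> ('a \<times> 'a \<Rightarrow> 'a \<times> 'a \<Rightarrow> bool)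
      \<Rightarrow> (nat \<Rightarrow> 'a) set"
  where "anchored_cycles V E n Y Z sim = {x \<in> hom_cycles V E (2*n). x 0 \<in> Y \<and> x (2*n - 1) \<in> Z \<and>
    (\<exists>i<n. sim (x i, x (Suc i)) (x (2*n - 1), x 0))}"

lemma finite_anchored_cycles: "finite V \<Longrightarrow> finite (anchored_cycles V E n Y Z sim)"
  unfolding anchored_cycles_def using finite_hom_cycles[of V E "2*n"] by auto

lemma card_anchored_cycles_le_card_Sigma:
  assumes G: "simple_graph V E" and n: "n \<ge> 2"
  shows "card (anchored_cycles V E n Y Z sim)
         \<le> card (SIGMA p:{p \<in> walks V E n. p 0 \<in> Y}. closing_walks V E Z sim n p)"
proof -
  have fV: "finite V" using simple_graph_finite[OF G] .
  let ?split = "\<lambda>x. (restrict x {0..n}, restrict (\<lambda>i. x (n + i)) {0..n - 1})"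
  have "?split ` anchored_cycles V E n Y Z sim
      \<subseteq> (SIGMA p:{p \<in> walks V E n. p 0 \<in> Y}. closing_walks V E Z sim n p)"
  proof (rule image_subsetI)
    fix x assume "x \<in> anchored_cycles V E n Y Z sim"
    then obtain i where x: "x \<in> hom_cycles V E (2*n)" and x0: "x 0 \<in> Y" and xz: "x (2*n - 1) \<in> Z"
      and i: "i < n" and si: "sim (x i, x (Suc i)) (x (2*n - 1), x 0)"
      unfolding anchored_cycles_def by blast
    have xV: "j < 2*n \<Longrightarrow> x j \<in> V" for j using x unfolding hom_cycles_def by auto
    have xE: "j < 2*n \<Longrightarrow> E (x j) (x (Suc j mod (2*n)))" for j
      using x unfolding hom_cycles_def by auto
    have xE': "Suc j < 2*n \<Longrightarrow> E (x j) (x (Suc j))" for j using xE[of j] by simp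
    have closing: "E (x 0) (x (2*n - 1))"
      using xE[of "2*n - 1"] n simple_graph_sym[OF G] by simp
    have "restrict x {0..n} \<in> walks V E n" "restrict (\<lambda>i. x (n + i)) {0..n - 1} \<in> walks V E (n - 1)"
      unfolding walks_def using xV xE' n by auto
    moreover have "Suc (n - 1) = n" "n + (n - 1) = 2*n - 1" using n by auto
    ultimately show "?split x \<in> (SIGMA p:{p \<in> walks V E n. p 0 \<in> Y}. closing_walks V E Z sim n p)"
      using x0 xz closing i si unfolding closing_walks_def sim_neighbours_def by auto
  qed
  moreover have "inj_on ?split (anchored_cycles V E n Y Z sim)"
  proof (rule inj_onI)
    fix x y assume x: "x \<in> anchored_cycles V E n Y Z sim" and y: "y \<in> anchored_cycles V E n Y Z sim"
      and eq: "?split x = ?split y"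
    show "x = y"
    proof
      fix j
      consider "j \<le> n" | "n < j" "j < 2*n" | "2*n \<le> j" by linarith
      then show "x j = y j"
      proof cases
        case 1 then show ?thesis using fun_cong[OF arg_cong[OF eq, of fst], of j] by simp
      next
        case 2
        then have "j - n \<le> n - 1" "n + (j - n) = j" by auto
        then show ?thesis using fun_cong[OF arg_cong[OF eq, of snd], of "j - n"] by simp
      next
        case 3
        have "x \<in> hom_cycles V E (2*n)" "y \<in> hom_cycles V E (2*n)"
          using x y unfolding anchored_cycles_def by auto
        then show ?thesis using hom_cycles_undefined 3 by metis
      qed
    qed
  qed
  moreover have "finite (SIGMA p:{p \<in> walks V E n. p 0 \<in> Y}. closing_walks V E Z sim n p)"
    by (rule finite_SigmaI) (use finite_walks[OF fV] in \<open>auto simp: closing_walks_def\<close>)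
  ultimately show ?thesis by (meson card_inj_on_le)
qed

lemma card_closing_walks:
  assumes fV: "finite V" and Z: "Z \<subseteq> V"
  shows "card (closing_walks V E Z sim n p)
       = (\<Sum>z\<in>sim_neighbours E Z sim n p. card (walks_between V E (n - 1) (p n) z))"
proof -
  have "closing_walks V E Z sim n p = (\<Union>z\<in>sim_neighbours E Z sim n p. walks_between V E (n - 1) (p n) z)"
    unfolding closing_walks_def walks_between_def by auto
  moreover have "finite (sim_neighbours E Z sim n p)"
    using finite_subset[OF Z fV] unfolding sim_neighbours_def by auto
  ultimately show ?thesis
    by (simp, subst card_UN_disjoint)
      (use finite_walks_between[OF fV] in \<open>auto simp: walks_between_def\<close>)
qed

lemma card_sim_neighbours_le:
  assumes fZ: "finite Z" and p: "p \<in> walks V E n" and p0: "p 0 \<in> Y"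
    and few_sim: "\<forall>u \<in> V. \<forall>v \<in> V. \<forall>w \<in> Y. card {z \<in> Z. E w z \<and> sim (u, v) (z, w)} \<le> s"
  shows "card (sim_neighbours E Z sim n p) \<le> n * s"
proof -
  have "card (sim_neighbours E Z sim n p)
      \<le> card (\<Union>i<n. {z \<in> Z. E (p 0) z \<and> sim (p i, p (Suc i)) (z, p 0)})"
    by (rule card_mono) (use fZ in \<open>auto simp: sim_neighbours_def\<close>)
  also have "\<dots> \<le> (\<Sum>i<n. card {z \<in> Z. E (p 0) z \<and> sim (p i, p (Suc i)) (z, p 0)})"
    by (rule card_UN_le) simp
  also have "\<dots> \<le> (\<Sum>i<n. s)"
    by (rule sum_mono) (use few_sim p0 walks_in_V[OF p] in auto)
  finally show ?thesis by simp
qed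

lemma card_closing_walks_le:
  assumes fV: "finite V" and Z: "Z \<subseteq> V" and p: "p \<in> walks V E n" and p0: "p 0 \<in> Y"
    and few_sim: "\<forall>u \<in> V. \<forall>v \<in> V. \<forall>w \<in> Y. card {z \<in> Z. E w z \<and> sim (u, v) (z, w)} \<le> s"
  shows "real (card (closing_walks V E Z sim n p)) \<le>
      sqrt (real n * real s * (\<Sum>z\<in>{z \<in> Z. E (p 0) z}. real (card (walks_between V E (n - 1) (p n) z))^2))"
proof (rule real_le_rsqrt)
  let ?S = "sim_neighbours E Z sim n p"
  let ?w = "\<lambda>z. real (card (walks_between V E (n - 1) (p n) z))"
  have fZ: "finite Z" using finite_subset[OF Z fV] .
  have "(real (card (closing_walks V E Z sim n p)))^2 = (\<Sum>z\<in>?S. ?w z)^2"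
    using card_closing_walks[OF fV Z] by simp
  also have "\<dots> \<le> (\<Sum>z\<in>?S. (?w z)^2) * card ?S"
    by (rule sum_squared_le_sum_of_squares)
  also have "\<dots> \<le> (\<Sum>z\<in>{z \<in> Z. E (p 0) z}. (?w z)^2) * (real n * real s)"
  proof (rule mult_mono)
    show "(\<Sum>z\<in>?S. (?w z)^2) \<le> (\<Sum>z\<in>{z \<in> Z. E (p 0) z}. (?w z)^2)"
      by (rule sum_mono2) (use fZ in \<open>auto simp: sim_neighbours_def\<close>)
    show "real (card ?S) \<le> real n * real s"
      using card_sim_neighbours_le[OF fZ p p0 few_sim] by (metis of_nat_le_iff of_nat_mult)
  qed (auto intro: sum_nonneg)
  finally show "(real (card (closing_walks V E Z sim n p)))^2 \<le>
      real n * real s * (\<Sum>z\<in>{z \<in> Z. E (p 0) z}. (?w z)^2)" by (simp add: mult_ac)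
qed

lemma sum_neighbour_walks_squared_le:
  assumes G: "simple_graph V E" and m: "m \<ge> 1" and Y: "Y \<subseteq> V" and Z: "Z \<subseteq> V"
    and few_nbrs: "\<forall>z \<in> Z. card {w \<in> Y. E z w} \<le> \<Delta>"
  shows "(\<Sum>(a, b)\<in>Y \<times> V. \<Sum>z\<in>{z \<in> Z. E a z}. real (card (walks_between V E m b z))^2)
     \<le> real \<Delta> * real (hom_cycle V E (2*m))"
proof -
  have fV: "finite V" using simple_graph_finite[OF G] .
  have fZ: "finite Z" using finite_subset[OF Z fV] .
  have fY: "finite Y" using finite_subset[OF Y fV] .
  let ?w = "\<lambda>b z. real (card (walks_between V E m b z))^2"
  have "(\<Sum>(a, b)\<in>Y \<times> V. \<Sum>z\<in>{z \<in> Z. E a z}. ?w b z)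
      = (\<Sum>a\<in>Y. \<Sum>b\<in>V. \<Sum>z\<in>Z. if E a z then ?w b z else 0)"
    by (simp add: sum.cartesian_product[symmetric] sum.inter_filter fZ)
  also have "\<dots> = (\<Sum>b\<in>V. \<Sum>z\<in>Z. \<Sum>a\<in>Y. if E a z then ?w b z else 0)"
    by (subst sum.swap) (simp add: sum.swap[of _ Y Z])
  also have "\<dots> = (\<Sum>b\<in>V. \<Sum>z\<in>Z. real (card {a \<in> Y. E z a}) * ?w b z)"
  proof (intro sum.cong refl)
    fix b z
    have "{a \<in> Y. E z a} = {a \<in> Y. E a z}" using simple_graph_sym[OF G] by blast
    then show "(\<Sum>a\<in>Y. if E a z then ?w b z else 0) = real (card {a \<in> Y. E z a}) * ?w b z"
      by (simp add: sum.inter_filter[symmetric] fY)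
  qed
  also have "\<dots> \<le> (\<Sum>b\<in>V. \<Sum>z\<in>V. real \<Delta> * ?w b z)"
  proof (rule sum_mono)
    fix b
    have "(\<Sum>z\<in>Z. real (card {a \<in> Y. E z a}) * ?w b z) \<le> (\<Sum>z\<in>Z. real \<Delta> * ?w b z)"
      by (rule sum_mono, rule mult_right_mono) (use few_nbrs in auto)
    also have "\<dots> \<le> (\<Sum>z\<in>V. real \<Delta> * ?w b z)"
      by (rule sum_mono2) (auto simp: fV Z)
    finally show "(\<Sum>z\<in>Z. real (card {a \<in> Y. E z a}) * ?w b z) \<le> (\<Sum>z\<in>V. real \<Delta> * ?w b z)" .
  qed
  also have "\<dots> = real \<Delta> * (\<Sum>(b, z)\<in>V \<times> V. ?w b z)"
    by (simp add: sum.cartesian_product[symmetric] sum_distrib_left)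
  also have "\<dots> \<le> real \<Delta> * real (hom_cycle V E (2*m))"
    by (rule mult_left_mono) (use sum_card_walks_between_squared_le[OF G m] in auto)
  finally show ?thesis .
qed

lemma card_anchored_cycles_le:
  assumes G: "simple_graph V E" and n: "n \<ge> 2" and Y: "Y \<subseteq> V" and Z: "Z \<subseteq> V"
    and few_sim: "\<forall>u \<in> V. \<forall>v \<in> V. \<forall>w \<in> Y. card {z \<in> Z. E w z \<and> sim (u, v) (z, w)} \<le> s"
    and few_nbrs: "\<forall>z \<in> Z. card {w \<in> Y. E z w} \<le> \<Delta>" and M: "s * \<Delta> \<le> M"
  shows "real (card (anchored_cycles V E n Y Z sim))
     \<le> sqrt (real n * real M * real (hom_cycle V E (2*n - 2)) * real (hom_cycle V E (2*n)))"
proof -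
  have fV: "finite V" using simple_graph_finite[OF G] .
  let ?P = "{p \<in> walks V E n. p 0 \<in> Y}"
  define W where "W = (\<lambda>(a, b). real (card (walks_between V E n a b)))"
  define R where "R a b = real n * real s *
    (\<Sum>z\<in>{z \<in> Z. E a z}. real (card (walks_between V E (n - 1) b z))^2)" for a b
  have R_nonneg: "R a b \<ge> 0" for a b unfolding R_def by (intro mult_nonneg_nonneg sum_nonneg) auto
  have "real (card (anchored_cycles V E n Y Z sim)) \<le> real (card (SIGMA p:?P. closing_walks V E Z sim n p))"
    using card_anchored_cycles_le_card_Sigma[OF G n] by simp
  also have "\<dots> = (\<Sum>p\<in>?P. real (card (closing_walks V E Z sim n p)))"
    by (subst card_SigmaI) (use finite_walks[OF fV] in \<open>auto simp: closing_walks_def\<close>)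
  also have "\<dots> \<le> (\<Sum>p\<in>?P. sqrt (R (p 0) (p n)))"
    by (rule sum_mono) (use card_closing_walks_le[OF fV Z _ _ few_sim] in \<open>auto simp: R_def\<close>)
  also have "\<dots> = (\<Sum>(a, b)\<in>Y \<times> V. W (a, b) * sqrt (R a b))"
    unfolding W_def using sum_walks_by_endpoints[OF fV Y, where h = "\<lambda>a b. sqrt (R a b)"]
    by (simp add: case_prod_beta)
  also have "\<dots> \<le> sqrt ((\<Sum>ab\<in>Y \<times> V. (W ab)^2) * (\<Sum>(a, b)\<in>Y \<times> V. R a b))"
    using sum_mult_sqrt_le[of "Y \<times> V" "\<lambda>(a, b). R a b" W] R_nonneg
    by (simp add: case_prod_beta)
  also have "\<dots> \<le> sqrt (real (hom_cycle V E (2*n)) * (real n * real M * real (hom_cycle V E (2*(n - 1)))))"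
  proof (rule real_sqrt_le_mono, rule mult_mono)
    have "(\<Sum>ab\<in>Y \<times> V. (W ab)^2) \<le> (\<Sum>ab\<in>V \<times> V. (W ab)^2)"
      by (rule sum_mono2) (use Y fV in auto)
    also have "\<dots> \<le> real (hom_cycle V E (2*n))"
      using sum_card_walks_between_squared_le[OF G, of n] n by (simp add: W_def case_prod_beta)
    finally show "(\<Sum>ab\<in>Y \<times> V. (W ab)^2) \<le> real (hom_cycle V E (2*n))" .
    have "(\<Sum>(a, b)\<in>Y \<times> V. R a b) \<le> real n * real s * (real \<Delta> * real (hom_cycle V E (2*(n - 1))))"
      using sum_neighbour_walks_squared_le[OF G _ Y Z few_nbrs, of "n - 1"] n
      unfolding R_def by (simp add: case_prod_beta sum_distrib_left[symmetric] mult_left_mono)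
    also have "\<dots> = real n * (real (s * \<Delta>) * real (hom_cycle V E (2*(n - 1))))"
      by simp
    also have "\<dots> \<le> real n * (real M * real (hom_cycle V E (2*(n - 1))))"
      using M by (intro mult_left_mono mult_right_mono) (simp_all flip: of_nat_mult)
    finally show "(\<Sum>(a, b)\<in>Y \<times> V. R a b) \<le> real n * real M * real (hom_cycle V E (2*(n - 1)))"
      by (simp add: mult.assoc)
  qed (use R_nonneg in \<open>auto intro: sum_nonneg\<close>)
  also have "2*(n - 1) = 2*n - 2" by simp
  finally show ?thesis by (simp add: mult_ac)
qed

definition rotate_cycle :: "nat \<Rightarrow> nat \<Rightarrow> (nat \<Rightarrow> 'a) \<Rightarrow> nat \<Rightarrow> 'a" where
  "rotate_cycle m d x = (\<lambda>i. if i < m then x ((i + d) mod m) else undefined)"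

lemma rotate_cycle_in_hom_cycles:
  assumes x: "x \<in> hom_cycles V E m"
  shows "rotate_cycle m d x \<in> hom_cycles V E m"
  unfolding hom_cycles_def mem_Collect_eq
proof (intro conjI allI impI)
  show "rotate_cycle m d x \<in> {0..<m} \<rightarrow>\<^sub>E V"
    using x by (auto simp: rotate_cycle_def hom_cycles_def)
  fix i assume i: "i < m"
  have "(Suc i mod m + d) mod m = Suc ((i + d) mod m) mod m"
    by (metis add_Suc mod_Suc_eq mod_add_left_eq)
  then show "E (rotate_cycle m d x i) (rotate_cycle m d x (Suc i mod m))"
    using x i by (simp add: rotate_cycle_def hom_cycles_def)
qed

lemma inj_on_rotate_cycle: "inj_on (rotate_cycle m d) (hom_cycles V E m)"
proof (rule inj_onI)
  fix x y assume x: "x \<in> hom_cycles V E m" and y: "y \<in> hom_cycles V E m"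
    and eq: "rotate_cycle m d x = rotate_cycle m d y"
  show "x = y"
  proof
    fix j show "x j = y j"
    proof (cases "j < m")
      case True
      let ?i = "(j + m - d mod m) mod m"
      have "d mod m < m" using True by simp
      then have "j + m - d mod m + d mod m = j + m" by simp
      moreover have "(?i + d) mod m = (j + m - d mod m + d mod m) mod m"
        by (metis mod_add_eq mod_mod_trivial)
      ultimately have "(?i + d) mod m = j" using True by simp
      then show ?thesis using fun_cong[OF eq, of ?i] True by (simp add: rotate_cycle_def)
    next
      case False then show ?thesis using x y hom_cycles_undefined by (metis not_less)
    qed
  qed
qed

lemma card_rotate_cycle_preimage_le:
  "finite T \<Longrightarrow> card {x \<in> hom_cycles V E m. rotate_cycle m d x \<in> T} \<le> card T"
  by (rule card_inj_on_le[OF inj_on_subset[OF inj_on_rotate_cycle]]) auto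

lemma card_rotations_into_le:
  assumes "finite T"
  shows "card {x \<in> hom_cycles V E m. \<exists>c<m. rotate_cycle m (Suc c) x \<in> T} \<le> m * card T"
proof -
  have "{x \<in> hom_cycles V E m. \<exists>c<m. rotate_cycle m (Suc c) x \<in> T}
      = (\<Union>c<m. {x \<in> hom_cycles V E m. rotate_cycle m (Suc c) x \<in> T})"
    by auto
  also have "card \<dots> \<le> (\<Sum>c<m. card {x \<in> hom_cycles V E m. rotate_cycle m (Suc c) x \<in> T})"
    by (rule card_UN_le) simp
  also have "\<dots> \<le> (\<Sum>c<m. card T)"
    by (rule sum_mono) (rule card_rotate_cycle_preimage_le[OF assms])
  finally show ?thesis by simp
qed

lemma rotate_cycle_in_anchored_cycles:
  assumes x: "x \<in> hom_cycles V E (2*k)" and c: "c < 2*k" and t: "t < k"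
    and Y: "x (Suc c mod (2*k)) \<in> Y" and Z: "x c \<in> Z"
    and s: "sim (x ((c + 1 + t) mod (2*k)), x ((c + 2 + t) mod (2*k))) (x c, x (Suc c mod (2*k)))"
  shows "rotate_cycle (2*k) (Suc c) x \<in> anchored_cycles V E k Y Z sim"
proof -
  let ?r = "rotate_cycle (2*k) (Suc c) x"
  have "(2*k - 1 + Suc c) mod (2*k) = (c + 2*k) mod (2*k)" using c by (simp add: algebra_simps)
  then have last: "?r (2*k - 1) = x c" using c by (simp add: rotate_cycle_def)
  have "?r 0 = x (Suc c mod (2*k))" "?r t = x ((c + 1 + t) mod (2*k))"
    "?r (Suc t) = x ((c + 2 + t) mod (2*k))"
    using t by (simp_all add: rotate_cycle_def add.commute add.left_commute)
  then show ?thesis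
    using rotate_cycle_in_hom_cycles[OF x] last Y Z s t unfolding anchored_cycles_def by auto
qed

lemma cyclic_distance_lt:
  fixes i j k :: nat
  assumes "i < 2*k" "j < 2*k" "i \<noteq> j"
  shows "\<exists>t<k. (j + 1 + t) mod (2*k) = i \<or> (i + 1 + t) mod (2*k) = j"
proof -
  have ordered: "\<exists>t<k. (j + 1 + t) mod (2*k) = i \<or> (i + 1 + t) mod (2*k) = j"
    if "j < i" "i < 2*k" for i j
  proof (cases "i - j \<le> k")
    case True
    then show ?thesis using that by (intro exI[of _ "i - j - 1"]) auto
  next
    case False
    have "i + 1 + (2*k - (i - j) - 1) = 2*k + j" using that False by simp
    then show ?thesis using that False by (intro exI[of _ "2*k - (i - j) - 1"]) auto
  qed
  show ?thesis
    using ordered[of j i] ordered[of i j] assms by (metis linorder_neqE_nat)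
qed

definition alternating :: "'a set \<Rightarrow> 'a set \<Rightarrow> nat \<Rightarrow> (nat \<Rightarrow> 'a) \<Rightarrow> bool" where
  "alternating Y Z m x \<longleftrightarrow> (\<forall>i<m. (even i \<longrightarrow> x i \<in> Y) \<and> (odd i \<longrightarrow> x i \<in> Z))"

lemma alternating_consecutive:
  assumes "alternating Y Z (2*k) x" and c: "c < 2*k"
  shows "(x (Suc c mod (2*k)) \<in> Y \<and> x c \<in> Z) \<or> (x (Suc c mod (2*k)) \<in> Z \<and> x c \<in> Y)"
proof -
  have "even (Suc c mod (2*k)) \<longleftrightarrow> odd c"
  proof (cases "Suc c = 2*k")
    case True
    then have "odd c" by (metis even_Suc dvd_triv_left)
    then show ?thesis using True by simp
  qed (use c in simp)
  then show ?thesis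
    using assms c unfolding alternating_def by (cases "even c") auto
qed

lemma cycles_with_similar_edges_subset_rotations:
  assumes sym: "\<forall>p \<in> V \<times> V. \<forall>q \<in> V \<times> V. sim p q \<longrightarrow> sim q p"
  shows "{x \<in> hom_cycles V E (2*k). (alternating Y Z (2*k) x \<or> alternating Z Y (2*k) x) \<and>
           (\<exists>i<2*k. \<exists>j<2*k. i \<noteq> j \<and> sim (x i, x (Suc i mod (2*k))) (x j, x (Suc j mod (2*k))))}
    \<subseteq> {x \<in> hom_cycles V E (2*k).
           \<exists>c<2*k. rotate_cycle (2*k) (Suc c) x \<in> anchored_cycles V E k Y Z sim \<union> anchored_cycles V E k Z Y sim}"
    (is "?S \<subseteq> {x \<in> _. \<exists>c<2*k. ?rotated x c}")
proof (intro subsetI CollectI conjI)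
  fix x assume "x \<in> ?S"
  then obtain i j where x: "x \<in> hom_cycles V E (2*k)"
    and alt: "alternating Y Z (2*k) x \<or> alternating Z Y (2*k) x"
    and ij: "i < 2*k" "j < 2*k" "i \<noteq> j"
    and sim_ij: "sim (x i, x (Suc i mod (2*k))) (x j, x (Suc j mod (2*k)))"
    by blast
  show "x \<in> hom_cycles V E (2*k)" by (rule x)
  have into: "?rotated x c"
    if c: "c < 2*k" and t: "t < k" and l: "(c + 1 + t) mod (2*k) = l"
      and s: "sim (x l, x (Suc l mod (2*k))) (x c, x (Suc c mod (2*k)))" for c t l
  proof -
    have "Suc l mod (2*k) = (c + 2 + t) mod (2*k)" unfolding l[symmetric] by (simp add: mod_Suc_eq)
    moreover have "(x (Suc c mod (2*k)) \<in> Y \<and> x c \<in> Z) \<or> (x (Suc c mod (2*k)) \<in> Z \<and> x c \<in> Y)"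
      using alt alternating_consecutive[OF _ c] by blast
    ultimately show ?thesis
      using rotate_cycle_in_anchored_cycles[OF x c t] s l by auto
  qed
  have sim_ji: "sim (x j, x (Suc j mod (2*k))) (x i, x (Suc i mod (2*k)))"
  proof -
    have "l < 2*k \<Longrightarrow> x l \<in> V" for l using x unfolding hom_cycles_def by auto
    then show ?thesis using sym sim_ij ij by simp
  qed
  obtain t where t: "t < k" and "(j + 1 + t) mod (2*k) = i \<or> (i + 1 + t) mod (2*k) = j"
    using cyclic_distance_lt[OF ij] by blast
  then show "\<exists>c<2*k. ?rotated x c"
    using into[OF ij(2) t _ sim_ij] into[OF ij(1) t _ sim_ji] ij by blast
qed

theorem lemma2p5:
  fixes V :: "'a set" and E :: "'a \<Rightarrow> 'a \<Rightarrow> bool" and k :: nat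
    and X1 X2 :: "'a set" and sim :: "'a \<times> 'a \<Rightarrow> 'a \<times> 'a \<Rightarrow> bool"
    and \<Delta>1 \<Delta>2 s1 s2 :: nat
  assumes k: "k \<ge> 2"
    and G: "simple_graph V E"
    and X1: "X1 \<subseteq> V" and X2: "X2 \<subseteq> V"
    and sym: "\<forall>p \<in> V \<times> V. \<forall>q \<in> V \<times> V. sim p q \<longrightarrow> sim q p"
    and a: "\<forall>u \<in> V. \<forall>v \<in> V. \<forall>w \<in> X1.
              card {z \<in> X2. E w z} \<le> \<Delta>1 \<and> card {z \<in> X2. E w z \<and> sim (u, v) (z, w)} \<le> s1"
    and b: "\<forall>u \<in> V. \<forall>v \<in> V. \<forall>w \<in> X2.
              card {z \<in> X1. E w z} \<le> \<Delta>2 \<and> card {z \<in> X1. E w z \<and> sim (u, v) (z, w)} \<le> s2"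
  shows "real (card {x \<in> hom_cycles V E (2 * k).
            ((\<forall>i < 2 * k. (even i \<longrightarrow> x i \<in> X1) \<and> (odd i \<longrightarrow> x i \<in> X2)) \<or>
             (\<forall>i < 2 * k. (even i \<longrightarrow> x i \<in> X2) \<and> (odd i \<longrightarrow> x i \<in> X1))) \<and>
            (\<exists>i < 2 * k. \<exists>j < 2 * k. i \<noteq> j \<and>
               sim (x i, x (Suc i mod (2 * k))) (x j, x (Suc j mod (2 * k))))})
         \<le> 32 * real k * sqrt (real k * real (max (\<Delta>1 * s2) (\<Delta>2 * s1))
              * real (hom_cycle V E (2 * k - 2)) * real (hom_cycle V E (2 * k)))"
  (is "real (card ?B) \<le> _")
proof -
  let ?A = "\<lambda>Y Z. anchored_cycles V E k Y Z sim"
  define S where "S = sqrt (real k * real (max (\<Delta>1 * s2) (\<Delta>2 * s1))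
    * real (hom_cycle V E (2*k - 2)) * real (hom_cycle V E (2*k)))"
  have fV: "finite V" using simple_graph_finite[OF G] .
  have A12: "real (card (?A X1 X2)) \<le> S"
    unfolding S_def
  proof (rule card_anchored_cycles_le[OF G k X1 X2])
    show "\<forall>z \<in> X2. card {w \<in> X1. E z w} \<le> \<Delta>2" using b X2 by blast
  qed (use a in \<open>auto simp: mult.commute\<close>)
  have A21: "real (card (?A X2 X1)) \<le> S"
    unfolding S_def
  proof (rule card_anchored_cycles_le[OF G k X2 X1])
    show "\<forall>z \<in> X1. card {w \<in> X2. E z w} \<le> \<Delta>1" using a X1 by blast
  qed (use b in \<open>auto simp: mult.commute\<close>)
  have "?B \<subseteq> {x \<in> hom_cycles V E (2*k). \<exists>c<2*k. rotate_cycle (2*k) (Suc c) x \<in> ?A X1 X2 \<union> ?A X2 X1}"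
    using cycles_with_similar_edges_subset_rotations[OF sym, of E k X1 X2] unfolding alternating_def .
  then have "card ?B \<le> card {x \<in> hom_cycles V E (2*k). \<exists>c<2*k. rotate_cycle (2*k) (Suc c) x \<in> ?A X1 X2 \<union> ?A X2 X1}"
    by (rule card_mono[rotated]) (simp add: finite_hom_cycles[OF fV])
  also have "\<dots> \<le> 2*k * card (?A X1 X2 \<union> ?A X2 X1)"
    by (rule card_rotations_into_le) (simp add: finite_anchored_cycles[OF fV])
  also have "\<dots> \<le> 2*k * (card (?A X1 X2) + card (?A X2 X1))"
    by (intro mult_left_mono card_Un_le) simp
  finally have "real (card ?B) \<le> 2 * real k * (real (card (?A X1 X2)) + real (card (?A X2 X1)))"
    using of_nat_mono by fastforce
  also have "\<dots> \<le> 2 * real k * (2 * S)"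
    using A12 A21 by (intro mult_left_mono) auto
  also have "\<dots> \<le> 32 * real k * S"
    unfolding S_def by simp
  finally show ?thesis unfolding S_def .
qed

end
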